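(* Let $\mathcal{G}$ be a connected, homogeneous, bidirected coupled cell network with cell set $\mathcal{C}=\{1,\dots,n\}$ and edge set $\mathcal{E}$, each cell having phase space $\mathbb{R}$. Let $f:\mathbb{R}^n\to\mathbb{R}^n$ be the $\mathcal{G}$-admissible vector field with components \[ f_c(x)=\sum_{d\in I(c)}\phi_{[(c,d)]}(x_d-x_c),\qquad c\in\mathcal{C}, \] where for each edge type $\xi$, $\phi_\xi:\mathbb{R}\to\mathbb{R}$ is an odd $C^1$ function. Suppose there exists $\varepsilon>0$ such that $\alpha\,\phi_\xi(\alpha)>0$ for all $\alpha\in(-\varepsilon,\varepsilon)\setminus\{0\}$ and all edge types $\xi$. Let $\Delta=\{x\in\mathbb{R}^n: x_1=\dots=x_n\}$ and let $\Omega=\{x\in\mathbb{R}^n:\operatorname{dist}(x,\Delta)<r\}$ be the largest open hypercylinder around $\Delta$ such that $x\in\Omega$ implies $|x_d-x_c|<\varepsilon$ for all $(c,d)\in\mathcal{E}$. Then: (i) $\Omega$ is invariant under the flow of $\dot x=f(x)$ (solutions starting in $\Omega$ remain in $\Omega$ for all positive times); (ii) for $x\in\Omega$, $f(x)=0$ if and only if $x\in\Delta$.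
   Context: A coupled cell network consists of cells $\mathcal{C}=\{1,\dots,n\}$, edges $\mathcal{E}\subset\mathcal{C}\times\mathcal{C}$ without loops, and an equivalence relation on edges (edge types; $[e]$ is the type of $e$) compatible with an equivalence relation on cells. The input set of $c$ is the set of edges $(d,c)\in\mathcal{E}$; one writes $d\in I(c)$ when $(d,c)\in\mathcal{E}$. Cells $c,d$ are input equivalent if there is an edge-type preserving bijection between their input sets; the network is homogeneous if all cells are input equivalent. It is bidirected if $(i,j)\in\mathcal{E}$ iff $(j,i)\in\mathcal{E}$, with $(i,j)$ and $(j,i)$ of the same type. Connected means the underlying graph is connected. Admissible maps have components depending only on the cell's own variable and its inputs, with identical functional form across input-equivalent cells, edges of the same type being treated identically. *)

theory Defs
  imports "HOL-Analysis.Analysis"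
begin

text \<open>Cells are the elements of a finite type 'n (so C = UNIV, n = CARD('n));
  an edge (d, c) runs from d to c.  Edge types are given by a labelling
  etyp :: 'n \<times> 'n \<Rightarrow> 'k (two edges have the same type iff same label);
  likewise cell types by ctyp :: 'n \<Rightarrow> 'c.\<close>

definition input_set :: "('n \<times> 'n) set \<Rightarrow> 'n \<Rightarrow> ('n \<times> 'n) set" where
  "input_set E c = {e \<in> E. snd e = c}"

definition coupled_cell_network ::
  "('n \<times> 'n) set \<Rightarrow> ('n \<times> 'n \<Rightarrow> 'k) \<Rightarrow> ('n \<Rightarrow> 'c) \<Rightarrow> bool" where
  "coupled_cell_network E etyp ctyp \<longleftrightarrow>
     (\<forall>c. (c, c) \<notin> E) \<and>
     (\<forall>e1\<in>E. \<forall>e2\<in>E. etyp e1 = etyp e2 \<longrightarrow>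
        ctyp (fst e1) = ctyp (fst e2) \<and> ctyp (snd e1) = ctyp (snd e2))"

definition input_equivalent ::
  "('n \<times> 'n) set \<Rightarrow> ('n \<times> 'n \<Rightarrow> 'k) \<Rightarrow> 'n \<Rightarrow> 'n \<Rightarrow> bool" where
  "input_equivalent E etyp c d \<longleftrightarrow>
     (\<exists>\<beta>. bij_betw \<beta> (input_set E c) (input_set E d) \<and>
          (\<forall>e \<in> input_set E c. etyp (\<beta> e) = etyp e))"

definition homogeneous :: "('n \<times> 'n) set \<Rightarrow> ('n \<times> 'n \<Rightarrow> 'k) \<Rightarrow> bool" where
  "homogeneous E etyp \<longleftrightarrow> (\<forall>c d. input_equivalent E etyp c d)"

definition bidirected :: "('n \<times> 'n) set \<Rightarrow> ('n \<times> 'n \<Rightarrow> 'k) \<Rightarrow> bool" where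
  "bidirected E etyp \<longleftrightarrow>
     (\<forall>i j. (i, j) \<in> E \<longleftrightarrow> (j, i) \<in> E) \<and> (\<forall>i j. (i, j) \<in> E \<longrightarrow> etyp (i, j) = etyp (j, i))"

definition network_connected :: "('n \<times> 'n) set \<Rightarrow> bool" where
  "network_connected E \<longleftrightarrow> (\<forall>c d. (c, d) \<in> (E \<union> E\<inverse>)\<^sup>*)"

definition diag :: "(real ^ 'n) set" where
  "diag = {x. \<forall>i j. x $ i = x $ j}"

definition hypercyl :: "real \<Rightarrow> (real ^ 'n) set" where
  "hypercyl r = {x. infdist x diag < r}"

text \<open>The largest open hypercylinder around the diagonal on which all coupled
  differences are below eps: the union of all such hypercylinders (which is
  itself such a hypercylinder, or the whole space when no radius bound exists).\<close>
definition max_cyl :: "('n \<times> 'n) set \<Rightarrow> real \<Rightarrow> (real ^ 'n) set" where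
  "max_cyl E eps = \<Union>{hypercyl r | r. \<forall>x \<in> hypercyl r. \<forall>(c, d) \<in> E. \<bar>x $ d - x $ c\<bar> < eps}"

end

(*
  The squared distance to the diagonal, V x = |x|^2 - (x . 1)^2 / n, is a Lyapunov function
  on every hypercylinder inside the band where all coupled differences are below eps.
  Odd coupling over bidirected edges is antisymmetric, so f x . 1 = 0 and
  2 (x . f x) = - (sum over edges (c, d) of a phi(a)), a = x_d - x_c, which is <= 0 in the band;
  hence V cannot increase while a solution stays in the cylinder, so it never leaves it.
  The same identity shows that an equilibrium in the band has a phi(a) = 0 on every edge,
  i.e. x_c = x_d along edges, and connectivity makes it synchronous.
*)
theory Submission
  imports Defs
begin

definition diag_sqdist :: "real ^ 'n::finite \<Rightarrow> real" where
  "diag_sqdist x = x \<bullet> x - (x \<bullet> 1)\<^sup>2 / real CARD('n)"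

lemma diag_eq_range: "diag = range (\<lambda>k. k *\<^sub>R (1 :: real ^ 'n))"
proof (intro set_eqI iffI)
  fix x :: "real ^ 'n"
  assume "x \<in> diag"
  then have "x = (x $ undefined) *\<^sub>R 1" by (simp add: diag_def vec_eq_iff)
  then show "x \<in> range (\<lambda>k. k *\<^sub>R 1)" by blast
qed (auto simp: diag_def)

lemma sqdist_const_vec:
  fixes x :: "real ^ 'n::finite"
  shows "(dist x (k *\<^sub>R 1))\<^sup>2 = diag_sqdist x + (real CARD('n) * k - x \<bullet> 1)\<^sup>2 / real CARD('n)"
proof -
  have ones: "1 \<bullet> (1 :: real ^ 'n) = real CARD('n)" by (simp add: inner_vec_def)
  have "(dist x (k *\<^sub>R 1))\<^sup>2 = x \<bullet> x - 2 * k * (x \<bullet> 1) + k\<^sup>2 * real CARD('n)"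
    by (simp add: dist_norm power2_norm_eq_inner inner_diff_left inner_diff_right ones
        inner_commute[of 1 x] algebra_simps flip: power2_eq_square)
  also have "\<dots> = diag_sqdist x + (real CARD('n) * k - x \<bullet> 1)\<^sup>2 / real CARD('n)"
    by (simp add: diag_sqdist_def power2_eq_square field_simps)
  finally show ?thesis .
qed

lemma diag_sqdist_nonneg: "0 \<le> diag_sqdist (x :: real ^ 'n::finite)"
  using sqdist_const_vec[of x "(x \<bullet> 1) / real CARD('n)"] by (simp, metis zero_le_power2)

lemma infdist_diag: "infdist x diag = sqrt (diag_sqdist (x :: real ^ 'n::finite))"
proof (rule antisym)
  let ?m = "(x \<bullet> 1) / real CARD('n)"
  have "infdist x diag \<le> dist x (?m *\<^sub>R 1)"
    by (rule infdist_le) (simp add: diag_eq_range)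
  also have "\<dots> = sqrt (diag_sqdist x)"
    using sqdist_const_vec[of x ?m] by (simp add: real_sqrt_unique)
  finally show "infdist x diag \<le> sqrt (diag_sqdist x)" .
next
  have "sqrt (diag_sqdist x) \<le> dist x (k *\<^sub>R 1)" for k
    using sqdist_const_vec[of x k] by (intro real_le_lsqrt) auto
  then show "sqrt (diag_sqdist x) \<le> infdist x diag"
    unfolding infdist_def diag_eq_range by (auto intro: cINF_greatest)
qed

lemma mem_hypercyl_iff: "(x :: real ^ 'n::finite) \<in> hypercyl r \<longleftrightarrow> 0 < r \<and> diag_sqdist x < r\<^sup>2"
proof -
  have "sqrt (diag_sqdist x) < r \<longleftrightarrow> 0 < r \<and> diag_sqdist x < r\<^sup>2"
    using diag_sqdist_nonneg[of x] real_sqrt_less_iff[of "diag_sqdist x" "r\<^sup>2"]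
    by (smt (verit) real_sqrt_abs real_sqrt_ge_zero)
  then show ?thesis by (simp add: hypercyl_def infdist_diag)
qed

lemma has_real_derivative_diag_sqdist:
  fixes y :: "real \<Rightarrow> real ^ 'n::finite"
  assumes "(y has_vector_derivative v) (at t within S)" and "v \<bullet> 1 = 0"
  shows "((\<lambda>t. diag_sqdist (y t)) has_real_derivative 2 * (y t \<bullet> v)) (at t within S)"
proof -
  have y': "(y has_derivative (\<lambda>h. h *\<^sub>R v)) (at t within S)"
    using assms(1) by (simp add: has_vector_derivative_def)
  show ?thesis
    unfolding diag_sqdist_def has_field_derivative_def
    by (rule has_derivative_eq_rhs,
        (rule derivative_intros has_derivative_inner[OF y' y'] has_derivative_inner[OF y'])+)
      (use assms(2) in \<open>auto simp: fun_eq_iff algebra_simps inner_commute\<close>)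
qed

lemma sublevel_invariant:
  fixes W W' :: "real \<Rightarrow> real"
  assumes deriv: "\<And>t. t \<in> {0..T} \<Longrightarrow> (W has_real_derivative W' t) (at t within {0..T})"
    and nonincr: "\<And>t. t \<in> {0..T} \<Longrightarrow> W t < c \<Longrightarrow> W' t \<le> 0"
    and start: "W 0 < c"
    and t: "t \<in> {0..T}"
  shows "W t < c"
proof (rule ccontr)
  define S where "S = {s \<in> {0..T}. c \<le> W s}"
  assume "\<not> W t < c"
  then have "S \<noteq> {}" using t by (auto simp: S_def)
  moreover have "bdd_below S" by (auto simp: S_def bdd_below_def)
  moreover have "closed S"
  proof -
    have "continuous_on {0..T} W"
      using deriv by (meson DERIV_continuous continuous_on_eq_continuous_within)
    then have "closed ({0..T} \<inter> W -` {c..})"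
      by (intro continuous_closed_preimage) auto
    then show ?thesis by (simp add: S_def Int_def)
  qed
  ultimately have "Inf S \<in> S" by (rule closed_contains_Inf)
  define s where "s = Inf S"
  have s: "s \<in> {0..T}" "c \<le> W s"
    using \<open>Inf S \<in> S\<close> by (auto simp: S_def s_def)
  then have "0 < s" using start by (cases "s = 0") auto
  have below: "W u < c" if "0 \<le> u" "u < s" for u
  proof (rule ccontr)
    assume "\<not> W u < c"
    then have "u \<in> S" using that s by (auto simp: S_def)
    then have "s \<le> u" unfolding s_def using \<open>bdd_below S\<close> by (rule cInf_lower)
    with that show False by simp
  qed
  \<comment> \<open>first time the level c is reached: the mean value theorem on [0, s] gives W s \<le> W 0\<close>
  have "\<exists>u\<in>{0<..<s}. W s - W 0 = W' u * (s - 0)"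
  proof (rule mvt_simple[OF \<open>0 < s\<close>, where f' = "\<lambda>u. (*) (W' u)"])
    fix u assume "0 \<le> u" "u \<le> s"
    then have "(W has_real_derivative W' u) (at u within {0..T})" using s by (intro deriv) auto
    then show "(W has_derivative (*) (W' u)) (at u within {0..s})"
      unfolding has_field_derivative_def by (rule has_derivative_subset) (use s in auto)
  qed
  then obtain u where u: "u \<in> {0<..<s}" and mvt: "W s - W 0 = W' u * s" by auto
  have "W' u \<le> 0" using u s by (intro nonincr below) auto
  then have "W s \<le> W 0" using mvt mult_nonpos_nonneg[of "W' u" s] \<open>0 < s\<close> by linarith
  then show False using s start by linarith
qed

lemma hypercyl_invariant:
  fixes f :: "real ^ 'n::finite \<Rightarrow> real ^ 'n" and y :: "real \<Rightarrow> real ^ 'n"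
  assumes mean_preserving: "\<And>x. f x \<bullet> 1 = 0"
    and inward: "\<And>x. x \<in> hypercyl r \<Longrightarrow> x \<bullet> f x \<le> 0"
    and sol: "\<And>t. t \<in> {0..T} \<Longrightarrow> (y has_vector_derivative f (y t)) (at t within {0..T})"
    and start: "y 0 \<in> hypercyl r"
    and t: "t \<in> {0..T}"
  shows "y t \<in> hypercyl r"
proof -
  have "diag_sqdist (y t) < r\<^sup>2"
  proof (rule sublevel_invariant[where W = "\<lambda>t. diag_sqdist (y t)" and W' = "\<lambda>t. 2 * (y t \<bullet> f (y t))"])
    fix s assume "s \<in> {0..T}"
    then show "((\<lambda>t. diag_sqdist (y t)) has_real_derivative 2 * (y s \<bullet> f (y s))) (at s within {0..T})"
      by (intro has_real_derivative_diag_sqdist sol mean_preserving)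
  next
    fix s assume "s \<in> {0..T}" "diag_sqdist (y s) < r\<^sup>2"
    then show "2 * (y s \<bullet> f (y s)) \<le> 0"
      using start inward by (simp add: mem_hypercyl_iff)
  qed (use start t in \<open>simp_all add: mem_hypercyl_iff\<close>)
  then show ?thesis using start by (simp add: mem_hypercyl_iff)
qed

lemma sum_sym_rel_swap:
  assumes "sym E"
  shows "(\<Sum>(c, d)\<in>E. h c d) = (\<Sum>(c, d)\<in>E. h d c)"
  by (rule sum.reindex_bij_witness[of _ prod.swap prod.swap])
    (use assms in \<open>auto dest: symD\<close>)

lemma sum_antisym_weighted:
  fixes g :: "'a \<Rightarrow> 'a \<Rightarrow> 'b::comm_ring_1"
  assumes "sym E" and antisym: "\<And>c d. (c, d) \<in> E \<Longrightarrow> g d c = - g c d"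
  shows "2 * (\<Sum>(c, d)\<in>E. x c * g c d) = (\<Sum>(c, d)\<in>E. (x c - x d) * g c d)"
proof -
  have "(\<Sum>(c, d)\<in>E. x c * g c d) = (\<Sum>(c, d)\<in>E. x d * g d c)"
    by (rule sum_sym_rel_swap[OF \<open>sym E\<close>])
  also have "\<dots> = - (\<Sum>(c, d)\<in>E. x d * g c d)"
    unfolding sum_negf[symmetric]
  proof (rule sum.cong)
    fix e assume "e \<in> E"
    moreover obtain c d where "e = (c, d)" by fastforce
    ultimately show "(case e of (c, d) \<Rightarrow> x d * g d c) = - (case e of (c, d) \<Rightarrow> x d * g c d)"
      using antisym[of c d] by simp
  qed simp
  finally have swap: "(\<Sum>(c, d)\<in>E. x c * g c d) = - (\<Sum>(c, d)\<in>E. x d * g c d)" .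
  have "(\<Sum>(c, d)\<in>E. (x c - x d) * g c d)
      = (\<Sum>(c, d)\<in>E. x c * g c d) - (\<Sum>(c, d)\<in>E. x d * g c d)"
    unfolding sum_subtractf[symmetric] by (intro sum.cong) (auto simp: left_diff_distrib)
  with swap show ?thesis by (simp only: mult_2 diff_conv_add_uminus)
qed

lemma sum_in_neighbours:
  fixes E :: "('a::finite \<times> 'a) set"
  shows "(\<Sum>c\<in>UNIV. \<Sum>d\<in>{d. (d, c) \<in> E}. h c d) = (\<Sum>(c, d)\<in>E\<inverse>. h c d)"
proof -
  have "Sigma UNIV (\<lambda>c. {d. (d, c) \<in> E}) = E\<inverse>" by auto
  then show ?thesis by (simp add: sum.Sigma)
qed

definition edge_band :: "('n \<times> 'n) set \<Rightarrow> real \<Rightarrow> (real ^ 'n) set" where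
  "edge_band E \<epsilon> = {x. \<forall>(c, d)\<in>E. \<bar>x $ d - x $ c\<bar> < \<epsilon>}"

lemma mem_max_cyl_iff:
  "x \<in> max_cyl E \<epsilon> \<longleftrightarrow> (\<exists>r. x \<in> hypercyl r \<and> hypercyl r \<subseteq> edge_band E \<epsilon>)"
  unfolding max_cyl_def edge_band_def by blast

lemma max_cyl_subset_edge_band: "max_cyl E \<epsilon> \<subseteq> edge_band E \<epsilon>"
  by (auto simp: mem_max_cyl_iff)

lemma edges_sync_imp_diag:
  assumes "network_connected E" and sync: "\<And>c d. (c, d) \<in> E \<Longrightarrow> x $ c = x $ d"
  shows "x \<in> diag"
proof -
  have "x $ c = x $ d" if "(c, d) \<in> (E \<union> E\<inverse>)\<^sup>*" for c d
    using that by (induction rule: rtrancl_induct) (auto dest: sync)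
  then show ?thesis
    using assms(1) by (simp add: diag_def network_connected_def)
qed

locale odd_bidirected_coupling =
  fixes E :: "('n::finite \<times> 'n) set" and etyp :: "'n \<times> 'n \<Rightarrow> 'k" and \<phi> :: "'k \<Rightarrow> real \<Rightarrow> real"
  assumes bidirected: "bidirected E etyp"
    and odd: "\<And>\<xi> a. \<xi> \<in> etyp ` E \<Longrightarrow> \<phi> \<xi> (- a) = - \<phi> \<xi> a"
begin

definition coupling :: "real ^ 'n \<Rightarrow> 'n \<Rightarrow> 'n \<Rightarrow> real" where
  "coupling x c d = \<phi> (etyp (c, d)) (x $ d - x $ c)"

definition coupling_field :: "real ^ 'n \<Rightarrow> real ^ 'n" where
  "coupling_field x = (\<chi> c. \<Sum>d\<in>{d. (d, c) \<in> E}. coupling x c d)"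

lemma sym_E: "sym E"
  using bidirected by (auto simp: bidirected_def intro: symI)

lemma converse_E: "E\<inverse> = E"
  using sym_E by (simp add: sym_conv_converse_eq)

lemma coupling_antisym:
  assumes "(c, d) \<in> E"
  shows "coupling x d c = - coupling x c d"
proof -
  have "etyp (d, c) = etyp (c, d)"
    using assms bidirected by (auto simp: bidirected_def)
  moreover have "etyp (c, d) \<in> etyp ` E" using assms by blast
  ultimately show ?thesis
    using odd[of "etyp (c, d)" "x $ d - x $ c"] by (simp add: coupling_def)
qed

lemma coupling_field_diag:
  assumes "x \<in> diag"
  shows "coupling_field x = 0"
proof -
  have "coupling x c d = 0" if "(d, c) \<in> E" for c d
  proof -
    have "etyp (c, d) \<in> etyp ` E" using sym_E that by (blast dest: symD)
    then have "\<phi> (etyp (c, d)) 0 = 0" using odd[of "etyp (c, d)" 0] by simp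
    moreover have "x $ d = x $ c" using assms by (simp add: diag_def)
    ultimately show ?thesis by (simp add: coupling_def)
  qed
  then show ?thesis by (simp add: coupling_field_def vec_eq_iff)
qed

lemma inner_coupling_field_weighted:
  "2 * (\<Sum>c\<in>UNIV. w c * coupling_field x $ c) = (\<Sum>(c, d)\<in>E. (w c - w d) * coupling x c d)"
proof -
  have "(\<Sum>c\<in>UNIV. w c * coupling_field x $ c) = (\<Sum>(c, d)\<in>E. w c * coupling x c d)"
    by (simp add: coupling_field_def sum_distrib_left sum_in_neighbours converse_E)
  then show ?thesis
    using sum_antisym_weighted[OF sym_E, of "coupling x" w] coupling_antisym by simp
qed

lemma inner_coupling_field_1: "coupling_field x \<bullet> 1 = 0"
  using inner_coupling_field_weighted[of "\<lambda>_. 1" x] by (simp add: inner_vec_def)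

lemma inner_coupling_field_self:
  "2 * (x \<bullet> coupling_field x) = - (\<Sum>(c, d)\<in>E. (x $ d - x $ c) * coupling x c d)"
  using inner_coupling_field_weighted[of "\<lambda>c. x $ c" x]
  by (simp add: inner_vec_def sum_negf[symmetric] case_prod_beta algebra_simps)

end

locale sign_definite_coupling = odd_bidirected_coupling +
  fixes \<epsilon> :: real
  assumes sign_definite: "\<And>\<xi> \<alpha>. \<xi> \<in> etyp ` E \<Longrightarrow> \<alpha> \<noteq> 0 \<Longrightarrow> \<bar>\<alpha>\<bar> < \<epsilon> \<Longrightarrow> \<alpha> * \<phi> \<xi> \<alpha> > 0"
begin

lemma edge_energy_nonneg:
  assumes "x \<in> edge_band E \<epsilon>" and "(c, d) \<in> E"
  shows "0 \<le> (x $ d - x $ c) * coupling x c d"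
    and "(x $ d - x $ c) * coupling x c d = 0 \<Longrightarrow> x $ c = x $ d"
proof -
  have "x $ d \<noteq> x $ c \<Longrightarrow> 0 < (x $ d - x $ c) * coupling x c d"
    using assms sign_definite[of "etyp (c, d)" "x $ d - x $ c"]
    by (force simp: edge_band_def coupling_def)
  then show "0 \<le> (x $ d - x $ c) * coupling x c d"
    and "(x $ d - x $ c) * coupling x c d = 0 \<Longrightarrow> x $ c = x $ d"
    by (cases "x $ d = x $ c"; force)+
qed

lemma inner_coupling_field_nonpos:
  assumes "x \<in> edge_band E \<epsilon>"
  shows "x \<bullet> coupling_field x \<le> 0"
proof -
  have "0 \<le> (\<Sum>(c, d)\<in>E. (x $ d - x $ c) * coupling x c d)"
    by (rule sum_nonneg) (auto intro: edge_energy_nonneg(1)[OF assms])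
  then show ?thesis using inner_coupling_field_self[of x] by linarith
qed

lemma coupling_field_eq_0_imp_sync:
  assumes "x \<in> edge_band E \<epsilon>" and "coupling_field x = 0" and "(c, d) \<in> E"
  shows "x $ c = x $ d"
proof -
  have "(\<Sum>(c, d)\<in>E. (x $ d - x $ c) * coupling x c d) = 0"
    using inner_coupling_field_self[of x] assms(2) by simp
  moreover have "\<forall>e\<in>E. 0 \<le> (case e of (c, d) \<Rightarrow> (x $ d - x $ c) * coupling x c d)"
    using edge_energy_nonneg(1)[OF assms(1)] by auto
  ultimately have "\<forall>e\<in>E. (case e of (c, d) \<Rightarrow> (x $ d - x $ c) * coupling x c d) = 0"
    by (simp add: sum_nonneg_eq_0_iff)
  then show ?thesis using edge_energy_nonneg(2)[OF assms(1,3)] assms(3) by auto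
qed

end

theorem lemma5p2:
  fixes E :: "('n::finite \<times> 'n) set"
    and etyp :: "'n \<times> 'n \<Rightarrow> 'k"
    and ctyp :: "'n \<Rightarrow> 'c"
    and \<phi> :: "'k \<Rightarrow> real \<Rightarrow> real"
    and f :: "real ^ 'n \<Rightarrow> real ^ 'n"
    and \<epsilon> :: real
  assumes net: "coupled_cell_network E etyp ctyp"
    and conn: "network_connected E"
    and hom: "homogeneous E etyp"
    and bidir: "bidirected E etyp"
    and f_def: "\<And>x. f x = (\<chi> c. \<Sum>d\<in>{d. (d, c) \<in> E}. \<phi> (etyp (c, d)) (x $ d - x $ c))"
    and odd: "\<And>\<xi> a. \<xi> \<in> etyp ` E \<Longrightarrow> \<phi> \<xi> (- a) = - \<phi> \<xi> a"
    and C1: "\<And>\<xi>. \<xi> \<in> etyp ` E \<Longrightarrow>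
               \<exists>\<phi>'. (\<forall>a. (\<phi> \<xi> has_real_derivative \<phi>' a) (at a)) \<and> continuous_on UNIV \<phi>'"
    and eps_pos: "\<epsilon> > 0"
    and sign: "\<And>\<xi> \<alpha>. \<xi> \<in> etyp ` E \<Longrightarrow> \<alpha> \<noteq> 0 \<Longrightarrow> \<bar>\<alpha>\<bar> < \<epsilon> \<Longrightarrow> \<alpha> * \<phi> \<xi> \<alpha> > 0"
  shows "(\<forall>(y :: real \<Rightarrow> real ^ 'n) T. T \<ge> 0 \<longrightarrow> y 0 \<in> max_cyl E \<epsilon> \<longrightarrow>
            (\<forall>t \<in> {0..T}. (y has_vector_derivative f (y t)) (at t within {0..T})) \<longrightarrow>
            (\<forall>t \<in> {0..T}. y t \<in> max_cyl E \<epsilon>))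
       \<and> (\<forall>x \<in> max_cyl E \<epsilon>. f x = 0 \<longleftrightarrow> x \<in> diag)"
proof -
  \<comment> \<open>Homogeneity and C1 regularity only matter for existence of solutions, which are given here.\<close>
  interpret sign_definite_coupling E etyp \<phi> \<epsilon>
    using bidir odd sign by unfold_locales
  have f: "f = coupling_field"
    by (simp add: fun_eq_iff f_def coupling_field_def coupling_def)
  have invariant: "y t \<in> max_cyl E \<epsilon>"
    if start: "y 0 \<in> max_cyl E \<epsilon>" and sol: "\<forall>s \<in> {0..T}. (y has_vector_derivative f (y s)) (at s within {0..T})"
      and t: "t \<in> {0..T}" for y T t
  proof -
    obtain r where r: "y 0 \<in> hypercyl r" "hypercyl r \<subseteq> edge_band E \<epsilon>"
      using start by (auto simp: mem_max_cyl_iff)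
    have "y t \<in> hypercyl r"
      using hypercyl_invariant[of f r T y t] sol r t
      by (auto simp: f inner_coupling_field_1 intro: inner_coupling_field_nonpos)
    then show ?thesis using r(2) by (auto simp: mem_max_cyl_iff)
  qed
  have equilibria: "f x = 0 \<longleftrightarrow> x \<in> diag" if "x \<in> max_cyl E \<epsilon>" for x
  proof
    assume "f x = 0"
    moreover have "x \<in> edge_band E \<epsilon>" using that max_cyl_subset_edge_band by blast
    ultimately show "x \<in> diag"
      by (intro edges_sync_imp_diag[OF conn] coupling_field_eq_0_imp_sync) (simp_all add: f)
  qed (simp add: f coupling_field_diag)
  show ?thesis using invariant equilibria by blast
qed

end
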